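(* Let $k$ be a commutative ring and let $H$ be an FH-algebra over $k$ with FH-homomorphism $f$ and right norm $t$ (so $f(tx)=\epsilon(x)$ for all $x\in H$). Let $b\in H$ be the right distinguished group-like element, i.e. the element with $gf=g(b)f$ for every $g\in H^*$. Then $$\sum t_2\otimes t_1=\sum b^{-1}S^2(t_1)\otimes t_2 \quad\text{in } H\otimes_k H,$$ where $\Delta(t)=\sum t_1\otimes t_2$ and $S$ is the antipode.
   Context: An FH-algebra over a commutative ring $k$ is a $k$-bialgebra $H$ which is a Frobenius algebra ($H$ finitely generated projective over $k$ and there are $f\in H^*=\mathrm{Hom}_k(H,k)$ and $x_i,y_i\in H$ with $\sum_i x_i f(y_ia)=a=\sum_i f(ax_i)y_i$ for all $a\in H$) whose Frobenius homomorphism $f$ is a right integral in $H^*$, i.e. $\sum f(a_1)a_2=f(a)1$ for all $a\in H$; such $f$ is called an FH-homomorphism. An FH-algebra automatically has a bijective antipode $S$. $H^*$ carries the convolution product $(gh)(x)=\sum g(x_1)h(x_2)$, with unit $\epsilon$. A right norm $t\in H$ (with respect to $f$) is an element with $f(tx)=\epsilon(x)$ for all $x\in H$; it satisfies $ta=\epsilon(a)t$. *)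

theory Defs
  imports Complex_Main
begin

text \<open>An element of the n-fold tensor power
H (x) ... (x) H is represented by a finite formal sum of pure tensors
h1 (x) ... (x) hn, written as a list of words of length n (coefficients are
absorbed into the first factor).  The tensor product over k is the free abelian
group on such words modulo additivity in each slot and moving scalars between
adjacent slots (standard construction).  tensor_rel is the subgroup of relations.\<close>

inductive_set tensor_rel :: "('k \<Rightarrow> 'h::ab_group_add \<Rightarrow> 'h) \<Rightarrow> ('h list \<Rightarrow> int) set"
  for smul :: "'k \<Rightarrow> 'h::ab_group_add \<Rightarrow> 'h" where
  zero: "(\<lambda>_. 0) \<in> tensor_rel smul"
| add: "p \<in> tensor_rel smul \<Longrightarrow> q \<in> tensor_rel smul \<Longrightarrow> (\<lambda>w. p w + q w) \<in> tensor_rel smul"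
| neg: "p \<in> tensor_rel smul \<Longrightarrow> (\<lambda>w. - p w) \<in> tensor_rel smul"
| additive: "(\<lambda>w. of_bool (w = u @ [x + y] @ v) - of_bool (w = u @ [x] @ v)
                   - of_bool (w = u @ [y] @ v)) \<in> tensor_rel smul"
| scalar: "(\<lambda>w. of_bool (w = u @ [smul c x, y] @ v) - of_bool (w = u @ [x, smul c y] @ v))
              \<in> tensor_rel smul"

definition fsum :: "'h list list \<Rightarrow> ('h list \<Rightarrow> int)" where
  "fsum xs = (\<lambda>w. int (count_list xs w))"

definition tensor_eq :: "('k \<Rightarrow> 'h::ab_group_add \<Rightarrow> 'h) \<Rightarrow> 'h list list \<Rightarrow> 'h list list \<Rightarrow> bool" where
  "tensor_eq smul xs ys \<longleftrightarrow> (\<lambda>w. fsum xs w - fsum ys w) \<in> tensor_rel smul"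

definition tens2 :: "('h \<times> 'h) list \<Rightarrow> 'h list list" where
  "tens2 ps = map (\<lambda>(x, y). [x, y]) ps"

definition dual_elem :: "('k::comm_ring_1 \<Rightarrow> 'h::ab_group_add \<Rightarrow> 'h) \<Rightarrow> ('h \<Rightarrow> 'k) \<Rightarrow> bool" where
  "dual_elem smul g \<longleftrightarrow> module_hom smul (*) g"

text \<open>H is finitely generated projective over k (dual basis formulation).\<close>
definition fg_projective :: "('k::comm_ring_1 \<Rightarrow> 'h::ab_group_add \<Rightarrow> 'h) \<Rightarrow> bool" where
  "fg_projective smul \<longleftrightarrow> (\<exists>es :: ('h \<times> ('h \<Rightarrow> 'k)) list.
      (\<forall>(e, \<phi>) \<in> set es. dual_elem smul \<phi>) \<and>
      (\<forall>a. a = sum_list (map (\<lambda>(e, \<phi>). smul (\<phi> a) e) es)))"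

text \<open>k-bialgebra structure on the ring 'h: multiplication and unit come from ring_1,
comultiplication Delta(a) = sum a1 (x) a2 is given by a list of pairs comult a,
counit eps.\<close>
definition bialgebra ::
  "('k::comm_ring_1 \<Rightarrow> 'h::ring_1 \<Rightarrow> 'h) \<Rightarrow> ('h \<Rightarrow> ('h \<times> 'h) list) \<Rightarrow> ('h \<Rightarrow> 'k) \<Rightarrow> bool" where
  "bialgebra smul comult eps \<longleftrightarrow>
     \<comment> \<open>k-algebra\<close>
     module smul \<and>
     (\<forall>c a b. smul c (a * b) = smul c a * b \<and> smul c (a * b) = a * smul c b) \<and>
     \<comment> \<open>comultiplication is k-linear\<close>
     (\<forall>a b. tensor_eq smul (tens2 (comult (a + b))) (tens2 (comult a) @ tens2 (comult b))) \<and>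
     (\<forall>c a. tensor_eq smul (tens2 (comult (smul c a)))
                            (map (\<lambda>(x, y). [smul c x, y]) (comult a))) \<and>
     \<comment> \<open>counit is k-linear\<close>
     dual_elem smul eps \<and>
     \<comment> \<open>coassociativity in H (x) H (x) H\<close>
     (\<forall>a. tensor_eq smul
            (concat (map (\<lambda>(x, y). map (\<lambda>(y1, y2). [x, y1, y2]) (comult y)) (comult a)))
            (concat (map (\<lambda>(x, y). map (\<lambda>(x1, x2). [x1, x2, y]) (comult x)) (comult a)))) \<and>
     \<comment> \<open>counit property\<close>
     (\<forall>a. sum_list (map (\<lambda>(x, y). smul (eps x) y) (comult a)) = a) \<and>
     (\<forall>a. sum_list (map (\<lambda>(x, y). smul (eps y) x) (comult a)) = a) \<and>
     \<comment> \<open>comultiplication and counit are algebra maps\<close>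
     (\<forall>a b. tensor_eq smul (tens2 (comult (a * b)))
              (concat (map (\<lambda>(x1, x2). map (\<lambda>(y1, y2). [x1 * y1, x2 * y2]) (comult b)) (comult a)))) \<and>
     tensor_eq smul (tens2 (comult 1)) [[1, 1]] \<and>
     (\<forall>a b. eps (a * b) = eps a * eps b) \<and>
     eps 1 = 1"

definition antipode ::
  "('k::comm_ring_1 \<Rightarrow> 'h::ring_1 \<Rightarrow> 'h) \<Rightarrow> ('h \<Rightarrow> ('h \<times> 'h) list) \<Rightarrow> ('h \<Rightarrow> 'k) \<Rightarrow> ('h \<Rightarrow> 'h) \<Rightarrow> bool" where
  "antipode smul comult eps S \<longleftrightarrow>
     module_hom smul smul S \<and>
     (\<forall>a. sum_list (map (\<lambda>(x, y). S x * y) (comult a)) = smul (eps a) 1) \<and>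
     (\<forall>a. sum_list (map (\<lambda>(x, y). x * S y) (comult a)) = smul (eps a) 1)"

definition conv :: "('h \<Rightarrow> ('h \<times> 'h) list) \<Rightarrow> ('h \<Rightarrow> 'k::comm_ring_1) \<Rightarrow> ('h \<Rightarrow> 'k) \<Rightarrow> ('h \<Rightarrow> 'k)" where
  "conv comult g h = (\<lambda>x. sum_list (map (\<lambda>(x1, x2). g x1 * h x2) (comult x)))"

definition frobenius_hom :: "('k::comm_ring_1 \<Rightarrow> 'h::ring_1 \<Rightarrow> 'h) \<Rightarrow> ('h \<Rightarrow> 'k) \<Rightarrow> bool" where
  "frobenius_hom smul f \<longleftrightarrow>
     fg_projective smul \<and> dual_elem smul f \<and>
     (\<exists>xys :: ('h \<times> 'h) list. \<forall>a.
        sum_list (map (\<lambda>(x, y). smul (f (y * a)) x) xys) = a \<and>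
        sum_list (map (\<lambda>(x, y). smul (f (a * x)) y) xys) = a)"

definition right_integral :: "('k::comm_ring_1 \<Rightarrow> 'h::ring_1 \<Rightarrow> 'h) \<Rightarrow> ('h \<Rightarrow> ('h \<times> 'h) list) \<Rightarrow> ('h \<Rightarrow> 'k) \<Rightarrow> bool" where
  "right_integral smul comult f \<longleftrightarrow>
     (\<forall>a. sum_list (map (\<lambda>(x, y). smul (f x) y) (comult a)) = smul (f a) 1)"

definition FH_algebra ::
  "('k::comm_ring_1 \<Rightarrow> 'h::ring_1 \<Rightarrow> 'h) \<Rightarrow> ('h \<Rightarrow> ('h \<times> 'h) list) \<Rightarrow> ('h \<Rightarrow> 'k) \<Rightarrow> ('h \<Rightarrow> 'k) \<Rightarrow> bool" where
  "FH_algebra smul comult eps f \<longleftrightarrow>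
     bialgebra smul comult eps \<and> frobenius_hom smul f \<and> right_integral smul comult f"

end

theory Submission
  imports Defs "HOL-Library.Multiset"
begin

text \<open>
  Tensors in H \<otimes> H are compared by contracting their second factor against the coordinate
  functionals a \<mapsto> f (a x_i) of the Frobenius structure. Against f (_ x), the flipped
  coproduct of t gives \<Sum> f (t1 x) t2, which is S x by the right-integral identity
  \<Sum> f (a z1) S z2 = \<Sum> f (a1 z) a2 and f (t z) = \<epsilon> z. The other side gives
  \<Sum> f (t2 x) b^-1 S^2 t1 = S (\<Sum> S t1 f (t2 x) b), and \<Sum> S t1 f (t2 x) b = x because
  \<Sum> f (x2) x1 = f x b by the defining property of b. Here b is group-like (both sides of
  \<Delta> b = b \<otimes> b agree under all products of functionals, which separate points since H is
  finitely generated projective), so it is invertible with inverse S b and S (u b) = S b S u.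
\<close>

lemma fsum_append: "fsum (xs @ ys) w = fsum xs w + fsum ys w"
  by (simp add: fsum_def)

lemma tensor_eq_refl: "tensor_eq smul xs xs"
  unfolding tensor_eq_def using tensor_rel.zero by simp

lemma tensor_eq_sym: "tensor_eq smul xs ys \<Longrightarrow> tensor_eq smul ys xs"
  unfolding tensor_eq_def by (drule tensor_rel.neg) simp

lemma tensor_eq_trans [trans]:
  "tensor_eq smul xs ys \<Longrightarrow> tensor_eq smul ys zs \<Longrightarrow> tensor_eq smul xs zs"
  unfolding tensor_eq_def by (drule (1) tensor_rel.add) simp

lemma tensor_eq_append:
  "tensor_eq smul xs ys \<Longrightarrow> tensor_eq smul zs ws \<Longrightarrow> tensor_eq smul (xs @ zs) (ys @ ws)"
  unfolding tensor_eq_def by (drule (1) tensor_rel.add) (simp add: fsum_append algebra_simps)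

lemma tensor_eq_append_cancel: "tensor_eq smul (xs @ zs) (ys @ zs) \<Longrightarrow> tensor_eq smul xs ys"
  unfolding tensor_eq_def by (simp add: fsum_append)

lemma tensor_eq_mset: "mset xs = mset ys \<Longrightarrow> tensor_eq smul xs ys"
  using tensor_eq_refl[of smul xs]
  by (simp add: tensor_eq_def fsum_def flip: count_mset)

lemma tensor_eq_concat_map:
  "(\<And>i. i \<in> set I \<Longrightarrow> tensor_eq smul (A i) (B i)) \<Longrightarrow>
     tensor_eq smul (concat (map A I)) (concat (map B I))"
  by (induction I) (auto intro: tensor_eq_append tensor_eq_refl)

lemma tensor_eq_map:
  "(\<And>i. i \<in> set I \<Longrightarrow> tensor_eq smul [A i] [B i]) \<Longrightarrow> tensor_eq smul (map A I) (map B I)"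
  using tensor_eq_concat_map[of I smul "\<lambda>i. [A i]" "\<lambda>i. [B i]"] by simp

lemma tensor_eq_additive: "tensor_eq smul [u @ [x + y] @ v] [u @ [x] @ v, u @ [y] @ v]"
proof -
  have "(\<lambda>w. fsum [u @ [x + y] @ v] w - fsum [u @ [x] @ v, u @ [y] @ v] w) =
     (\<lambda>w. of_bool (w = u @ [x + y] @ v) - of_bool (w = u @ [x] @ v) - of_bool (w = u @ [y] @ v))"
    by (rule ext) (simp add: fsum_def)
  then show ?thesis
    unfolding tensor_eq_def by (simp only: tensor_rel.additive)
qed

lemma tensor_eq_scalar: "tensor_eq smul [u @ [smul c x, y] @ v] [u @ [x, smul c y] @ v]"
proof -
  have "(\<lambda>w. fsum [u @ [smul c x, y] @ v] w - fsum [u @ [x, smul c y] @ v] w) =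
     (\<lambda>w. of_bool (w = u @ [smul c x, y] @ v) - of_bool (w = u @ [x, smul c y] @ v))"
    by (rule ext) (simp add: fsum_def)
  then show ?thesis
    unfolding tensor_eq_def by (simp only: tensor_rel.scalar)
qed

lemma tensor_eq_zero: "tensor_eq smul [u @ [0] @ v] []"
proof -
  have "tensor_eq smul ([] @ [u @ [0] @ v]) ([u @ [0] @ v] @ [u @ [0] @ v])"
    using tensor_eq_additive[of smul u 0 0 v] by simp
  then show ?thesis
    by (rule tensor_eq_sym[OF tensor_eq_append_cancel])
qed

lemma tensor_eq_sum_list:
  "tensor_eq smul [u @ [sum_list xs] @ v] (map (\<lambda>x. u @ [x] @ v) xs)"
proof (induction xs)
  case Nil
  then show ?case using tensor_eq_zero by simp
next
  case (Cons x xs)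
  have "tensor_eq smul [u @ [x + sum_list xs] @ v] ([u @ [x] @ v] @ [u @ [sum_list xs] @ v])"
    using tensor_eq_additive by simp
  also have "tensor_eq smul \<dots> ([u @ [x] @ v] @ map (\<lambda>x. u @ [x] @ v) xs)"
    by (rule tensor_eq_append[OF tensor_eq_refl Cons.IH])
  finally show ?case by simp
qed

section \<open>Balanced maps on tensor powers\<close>

text \<open>Equalities of tensors are used only through evaluation by balanced maps.\<close>

definition tensor_balanced :: "('k \<Rightarrow> 'h::ab_group_add \<Rightarrow> 'h) \<Rightarrow> ('h list \<Rightarrow> 'a::ring_1) \<Rightarrow> bool" where
  "tensor_balanced smul F \<longleftrightarrow>
     (\<forall>u v x y. F (u @ [x + y] @ v) = F (u @ [x] @ v) + F (u @ [y] @ v)) \<and>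
     (\<forall>u v c x y. F (u @ [smul c x, y] @ v) = F (u @ [x, smul c y] @ v))"

definition tensor_eval :: "('h list \<Rightarrow> 'a::ring_1) \<Rightarrow> ('h list \<Rightarrow> int) \<Rightarrow> 'a" where
  "tensor_eval F p = (\<Sum>w | p w \<noteq> 0. of_int (p w) * F w)"

lemma tensor_eval_superset:
  assumes "finite A" "{w. p w \<noteq> 0} \<subseteq> A"
  shows "(\<Sum>w\<in>A. of_int (p w) * F w) = tensor_eval F p"
  unfolding tensor_eval_def using assms by (intro sum.mono_neutral_right) auto

lemma sum_of_bool_mult:
  "finite A \<Longrightarrow> a \<in> A \<Longrightarrow> (\<Sum>w\<in>A. of_bool (w = a) * F w) = (F a :: 'a::ring_1)"
  by (simp add: if_distrib if_distribR sum.delta cong: if_cong)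

lemma tensor_rel_finite_support: "p \<in> tensor_rel smul \<Longrightarrow> finite {w. p w \<noteq> 0}"
proof (induction rule: tensor_rel.induct)
  case (add p q)
  have "{w. p w + q w \<noteq> 0} \<subseteq> {w. p w \<noteq> 0} \<union> {w. q w \<noteq> 0}"
    by auto
  then show ?case
    using add.IH by (meson finite_Un finite_subset)
next
  case (additive u x y v)
  show ?case
    by (rule finite_subset[of _ "{u @ [x + y] @ v, u @ [x] @ v, u @ [y] @ v}"]) auto
next
  case (scalar u c x y v)
  show ?case
    by (rule finite_subset[of _ "{u @ [smul c x, y] @ v, u @ [x, smul c y] @ v}"]) auto
qed simp_all

lemma tensor_eval_tensor_rel:
  assumes "p \<in> tensor_rel smul" and F: "tensor_balanced smul F"
  shows "tensor_eval F p = 0"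
  using assms(1)
proof (induction rule: tensor_rel.induct)
  case zero
  then show ?case by (simp add: tensor_eval_def)
next
  case (add p q)
  let ?A = "{w. p w \<noteq> 0} \<union> {w. q w \<noteq> 0}"
  have fin: "finite ?A"
    using add.hyps by (simp add: tensor_rel_finite_support)
  have "tensor_eval F (\<lambda>w. p w + q w) = (\<Sum>w\<in>?A. of_int (p w + q w) * F w)"
    using fin by (intro tensor_eval_superset[symmetric]) auto
  also have "\<dots> = tensor_eval F p + tensor_eval F q"
    using fin by (simp add: distrib_right sum.distrib tensor_eval_superset)
  finally show ?case using add.IH by simp
next
  case (neg p)
  then show ?case by (simp add: tensor_eval_def sum_negf)
next
  case (additive u x y v)
  let ?A = "{u @ [x + y] @ v, u @ [x] @ v, u @ [y] @ v}"
  have "tensor_eval F (\<lambda>w. of_bool (w = u @ [x + y] @ v) - of_bool (w = u @ [x] @ v)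
      - of_bool (w = u @ [y] @ v)) = F (u @ [x + y] @ v) - F (u @ [x] @ v) - F (u @ [y] @ v)"
    by (subst tensor_eval_superset[of ?A, symmetric])
      (auto simp: left_diff_distrib sum_subtractf sum_of_bool_mult simp del: of_bool_eq_iff)
  then show ?case using F by (simp add: tensor_balanced_def)
next
  case (scalar u c x y v)
  let ?A = "{u @ [smul c x, y] @ v, u @ [x, smul c y] @ v}"
  have "tensor_eval F (\<lambda>w. of_bool (w = u @ [smul c x, y] @ v) - of_bool (w = u @ [x, smul c y] @ v))
      = F (u @ [smul c x, y] @ v) - F (u @ [x, smul c y] @ v)"
    by (subst tensor_eval_superset[of ?A, symmetric])
      (auto simp: left_diff_distrib sum_subtractf sum_of_bool_mult simp del: of_bool_eq_iff)
  then show ?case using F by (simp add: tensor_balanced_def)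
qed

lemma sum_list_eq_sum_fsum:
  assumes "finite A" "set xs \<subseteq> A"
  shows "sum_list (map F xs) = (\<Sum>w\<in>A. of_int (fsum xs w) * (F w :: 'a::ring_1))"
  using assms(2)
proof (induction xs)
  case (Cons x xs)
  have "fsum (x # xs) w = fsum xs w + of_bool (w = x)" for w
    by (simp add: fsum_def)
  then show ?case
    using Cons assms(1) by (simp add: distrib_right sum.distrib sum_of_bool_mult)
qed (simp add: fsum_def)

lemma tensor_eq_eval:
  assumes "tensor_eq smul xs ys" "tensor_balanced smul F"
  shows "sum_list (map F xs) = sum_list (map F ys)"
proof -
  let ?p = "\<lambda>w. fsum xs w - fsum ys w" and ?A = "set xs \<union> set ys"
  have "(\<Sum>w\<in>?A. of_int (?p w) * F w) = tensor_eval F ?p"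
    by (rule tensor_eval_superset) (auto simp: fsum_def count_list_0_iff)
  also have "\<dots> = 0"
    using assms by (simp add: tensor_eq_def tensor_eval_tensor_rel)
  finally show ?thesis
    by (simp add: sum_list_eq_sum_fsum[of ?A] left_diff_distrib sum_subtractf)
qed

definition balanced2 :: "('k \<Rightarrow> 'h::ab_group_add \<Rightarrow> 'h) \<Rightarrow> ('h \<Rightarrow> 'h \<Rightarrow> 'a::ring_1) \<Rightarrow> bool" where
  "balanced2 smul G \<longleftrightarrow>
     (\<forall>x x' y. G (x + x') y = G x y + G x' y) \<and> (\<forall>x y y'. G x (y + y') = G x y + G x y') \<and>
     (\<forall>c x y. G (smul c x) y = G x (smul c y))"

definition balanced3 ::
  "('k \<Rightarrow> 'h::ab_group_add \<Rightarrow> 'h) \<Rightarrow> ('h \<Rightarrow> 'h \<Rightarrow> 'h \<Rightarrow> 'a::ring_1) \<Rightarrow> bool" where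
  "balanced3 smul H \<longleftrightarrow>
     (\<forall>x x' y z. H (x + x') y z = H x y z + H x' y z) \<and>
     (\<forall>x y y' z. H x (y + y') z = H x y z + H x y' z) \<and>
     (\<forall>x y z z'. H x y (z + z') = H x y z + H x y z') \<and>
     (\<forall>c x y z. H (smul c x) y z = H x (smul c y) z) \<and>
     (\<forall>c x y z. H x (smul c y) z = H x y (smul c z))"

definition eval2 :: "('h \<Rightarrow> 'h \<Rightarrow> 'a::ring_1) \<Rightarrow> 'h list \<Rightarrow> 'a" where
  "eval2 G w = (if length w = 2 then G (w ! 0) (w ! 1) else 0)"

definition eval3 :: "('h \<Rightarrow> 'h \<Rightarrow> 'h \<Rightarrow> 'a::ring_1) \<Rightarrow> 'h list \<Rightarrow> 'a" where
  "eval3 H w = (if length w = 3 then H (w ! 0) (w ! 1) (w ! 2) else 0)"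

lemma tensor_balanced_eval2:
  assumes "balanced2 smul G"
  shows "tensor_balanced smul (eval2 G)"
  unfolding tensor_balanced_def
proof (intro conjI allI)
  fix u v x y
  show "eval2 G (u @ [x + y] @ v) = eval2 G (u @ [x] @ v) + eval2 G (u @ [y] @ v)"
  proof (cases "length u + length v = 1")
    case True
    then have "length u = 0 \<or> length u = 1" by arith
    then show ?thesis
      using True assms by (auto simp: eval2_def nth_append balanced2_def)
  qed (auto simp: eval2_def)
next
  fix u v c x y
  show "eval2 G (u @ [smul c x, y] @ v) = eval2 G (u @ [x, smul c y] @ v)"
    using assms by (auto simp: eval2_def nth_append balanced2_def)
qed

lemma tensor_balanced_eval3:
  assumes "balanced3 smul H"
  shows "tensor_balanced smul (eval3 H)"
  unfolding tensor_balanced_def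
proof (intro conjI allI)
  fix u v x y
  show "eval3 H (u @ [x + y] @ v) = eval3 H (u @ [x] @ v) + eval3 H (u @ [y] @ v)"
  proof (cases "length u + length v = 2")
    case True
    then have "length u = 0 \<or> length u = 1 \<or> length u = 2" by arith
    then show ?thesis
      using True assms by (auto simp: eval3_def nth_append balanced3_def)
  qed (auto simp: eval3_def)
next
  fix u v c x y
  show "eval3 H (u @ [smul c x, y] @ v) = eval3 H (u @ [x, smul c y] @ v)"
  proof (cases "length u + length v = 1")
    case True
    then have "length u = 0 \<or> length u = 1" by arith
    then show ?thesis
      using True assms by (auto simp: eval3_def nth_append balanced3_def)
  qed (auto simp: eval3_def)
qed

lemma tens2_eval:
  assumes "tensor_eq smul (tens2 P) (tens2 Q)" "balanced2 smul G"
  shows "(\<Sum>(x, y)\<leftarrow>P. G x y) = (\<Sum>(x, y)\<leftarrow>Q. G x y)"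
proof -
  have "sum_list (map (eval2 G) (tens2 R)) = (\<Sum>(x, y)\<leftarrow>R. G x y)" for R
    by (induction R) (auto simp: tens2_def eval2_def)
  then show ?thesis
    using tensor_eq_eval[OF assms(1) tensor_balanced_eval2[OF assms(2)]] by simp
qed

lemma mset_concat_map_transpose:
  "mset (concat (map (\<lambda>p. map (g p) B) P)) = mset (concat (map (\<lambda>i. map (\<lambda>p. g p i) P) B))"
proof (induction P)
  case Nil
  then show ?case by (induction B) auto
next
  case (Cons p P)
  have "mset (concat (map (\<lambda>i. g p i # h i) B)) = mset (map (g p) B) + mset (concat (map h B))" for h
    by (induction B) (simp_all add: ac_simps)
  then show ?case using Cons.IH by simp
qed

lemma tens2_expand_coordinates:
  assumes coord: "\<And>a. a = (\<Sum>(x, y)\<leftarrow>B. smul (\<psi> x a) y)"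
  shows "tensor_eq smul (tens2 P) (map (\<lambda>(x, y). [\<Sum>(p, q)\<leftarrow>P. smul (\<psi> x q) p, y]) B)"
proof -
  let ?g = "\<lambda>(p, q) (x, y). [smul (\<psi> x q) p, y]"
  have pure: "tensor_eq smul [[p, q]] (map (?g (p, q)) B)" for p q
  proof -
    have "[[p, q]] = [[p] @ [\<Sum>(x, y)\<leftarrow>B. smul (\<psi> x q) y] @ []]"
      using coord[of q] by simp
    also have "tensor_eq smul \<dots> (map (\<lambda>z. [p] @ [z] @ []) (map (\<lambda>(x, y). smul (\<psi> x q) y) B))"
      by (rule tensor_eq_sum_list)
    also have "\<dots> = map (\<lambda>(x, y). [] @ [p, smul (\<psi> x q) y] @ []) B"
      by (induction B) auto
    also have "tensor_eq smul \<dots> (map (?g (p, q)) B)"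
      by (rule tensor_eq_map) (auto intro: tensor_eq_sym tensor_eq_scalar[of smul "[]", simplified])
    finally show ?thesis .
  qed
  have "tens2 P = concat (map (\<lambda>(p, q). [[p, q]]) P)"
    by (induction P) (auto simp: tens2_def)
  also have "tensor_eq smul \<dots> (concat (map (\<lambda>pq. map (?g pq) B) P))"
    by (rule tensor_eq_concat_map) (auto simp: pure[simplified])
  also have "tensor_eq smul \<dots> (concat (map (\<lambda>i. map (\<lambda>pq. ?g pq i) P) B))"
    by (rule tensor_eq_mset) (rule mset_concat_map_transpose)
  also have "tensor_eq smul \<dots> (concat (map (\<lambda>i. [case i of (x, y) \<Rightarrow> [\<Sum>(p, q)\<leftarrow>P. smul (\<psi> x q) p, y]]) B))"
  proof (rule tensor_eq_concat_map)
    fix i assume "i \<in> set B"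
    obtain x y where i: "i = (x, y)" by (cases i)
    show "tensor_eq smul (map (\<lambda>pq. ?g pq i) P) [case i of (x, y) \<Rightarrow> [\<Sum>(p, q)\<leftarrow>P. smul (\<psi> x q) p, y]]"
      using tensor_eq_sym[OF tensor_eq_sum_list[of smul "[]" "map (\<lambda>(p, q). smul (\<psi> x q) p) P" "[y]"]]
      by (simp add: i case_prod_beta comp_def)
  qed
  finally show ?thesis by (simp only: concat_map_singleton)
qed

lemma tens2_eq_by_coordinates:
  assumes "\<And>a. a = (\<Sum>(x, y)\<leftarrow>B. smul (\<psi> x a) y)"
    and "\<And>x y. (x, y) \<in> set B \<Longrightarrow> (\<Sum>(p, q)\<leftarrow>P. smul (\<psi> x q) p) = (\<Sum>(p, q)\<leftarrow>Q. smul (\<psi> x q) p)"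
  shows "tensor_eq smul (tens2 P) (tens2 Q)"
proof -
  have eq: "map (\<lambda>(x, y). [\<Sum>(p, q)\<leftarrow>P. smul (\<psi> x q) p, y]) B =
      map (\<lambda>(x, y). [\<Sum>(p, q)\<leftarrow>Q. smul (\<psi> x q) p, y]) B"
    using assms(2) by auto
  show ?thesis
    using tensor_eq_trans[OF tens2_expand_coordinates[OF assms(1), of P, unfolded eq]
        tensor_eq_sym[OF tens2_expand_coordinates[OF assms(1), of Q]]] .
qed

lemma additive_sum_pairs:
  fixes g :: "'a::ab_group_add \<Rightarrow> 'b::ab_group_add"
  assumes "\<And>x y. g (x + y) = g x + g y"
  shows "g (\<Sum>(x, y)\<leftarrow>P. h x y) = (\<Sum>(x, y)\<leftarrow>P. g (h x y))"
proof -
  have "g 0 = 0"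
    using assms[of 0 0] by simp
  then show ?thesis
    by (induction P) (auto simp: assms)
qed

lemma sum_pairs_mult_left: "(a::'a::ring_1) * (\<Sum>(x, y)\<leftarrow>P. h x y) = (\<Sum>(x, y)\<leftarrow>P. a * h x y)"
  by (rule additive_sum_pairs) (simp add: distrib_left)

lemma sum_pairs_mult_right: "(\<Sum>(x, y)\<leftarrow>P. h x y) * (a::'a::ring_1) = (\<Sum>(x, y)\<leftarrow>P. h x y * a)"
  by (rule additive_sum_pairs[where g = "\<lambda>x. x * a"]) (simp add: distrib_right)

lemma sum_pairs_cong:
  "(\<And>x y. (x, y) \<in> set P \<Longrightarrow> h x y = h' x y) \<Longrightarrow> (\<Sum>(x, y)\<leftarrow>P. h x y) = (\<Sum>(x, y)\<leftarrow>P. h' x y)"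
  by (rule arg_cong[where f = sum_list], rule map_cong) auto

lemma sum_pairs_swap:
  "(\<Sum>(p, q)\<leftarrow>A. \<Sum>(x, y)\<leftarrow>B. h p q x y) = (\<Sum>(x, y)\<leftarrow>B. \<Sum>(p, q)\<leftarrow>A. (h p q x y :: 'a::comm_monoid_add))"
  by (induction A) (auto simp: sum_list_addf case_prod_beta)

lemma sum_list_map_concat: "sum_list (map F (concat xss)) = (\<Sum>xs\<leftarrow>xss. sum_list (map F xs))"
  by (induction xss) auto

lemma dual_elem_add: "dual_elem smul g \<Longrightarrow> g (x + y) = g x + g y"
  by (simp add: dual_elem_def module_hom.add)

lemma dual_elem_scale: "dual_elem smul g \<Longrightarrow> g (smul c x) = c * g x"
  by (simp add: dual_elem_def module_hom.scale)

lemma dual_elem_sum_pairs: "dual_elem smul g \<Longrightarrow> g (\<Sum>(x, y)\<leftarrow>P. h x y) = (\<Sum>(x, y)\<leftarrow>P. g (h x y))"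
  by (rule additive_sum_pairs) (rule dual_elem_add)

lemma module_hom_sum_pairs:
  "module_hom s1 s2 S \<Longrightarrow> S (\<Sum>(x, y)\<leftarrow>P. h x y) = (\<Sum>(x, y)\<leftarrow>P. S (h x y))"
  by (rule additive_sum_pairs) (rule module_hom.add)

lemma fg_projective_dual_ext:
  fixes smul :: "'k::comm_ring_1 \<Rightarrow> 'h::ab_group_add \<Rightarrow> 'h"
  assumes "fg_projective smul" and "\<And>\<phi>. dual_elem smul \<phi> \<Longrightarrow> \<phi> x = \<phi> y"
  shows "x = y"
proof -
  obtain es :: "('h \<times> ('h \<Rightarrow> 'k)) list" where
    dual: "\<forall>(e, \<phi>) \<in> set es. dual_elem smul \<phi>" and
    basis: "\<And>a. a = (\<Sum>(e, \<phi>)\<leftarrow>es. smul (\<phi> a) e)"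
    using assms(1) unfolding fg_projective_def by blast
  have "x = (\<Sum>(e, \<phi>)\<leftarrow>es. smul (\<phi> x) e)" by (rule basis)
  also have "\<dots> = (\<Sum>(e, \<phi>)\<leftarrow>es. smul (\<phi> y) e)"
    using dual by (intro sum_pairs_cong) (auto simp: assms(2))
  also have "\<dots> = y" by (rule basis[symmetric])
  finally show ?thesis .
qed

definition grouplike ::
  "('k::comm_ring_1 \<Rightarrow> 'h::ring_1 \<Rightarrow> 'h) \<Rightarrow> ('h \<Rightarrow> ('h \<times> 'h) list) \<Rightarrow> ('h \<Rightarrow> 'k) \<Rightarrow> 'h \<Rightarrow> bool" where
  "grouplike smul comult eps g \<longleftrightarrow> tensor_eq smul (tens2 (comult g)) [[g, g]] \<and> eps g = 1"

locale k_bialgebra =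
  fixes smul :: "'k::comm_ring_1 \<Rightarrow> 'h::ring_1 \<Rightarrow> 'h"
    and comult :: "'h \<Rightarrow> ('h \<times> 'h) list"
    and eps :: "'h \<Rightarrow> 'k"
  assumes bialgebra: "bialgebra smul comult eps"
begin

sublocale module smul
  using bialgebra by (simp add: bialgebra_def)

lemma smul_mult_left: "smul c a * b = smul c (a * b)"
  using bialgebra unfolding bialgebra_def by metis

lemma smul_mult_right: "a * smul c b = smul c (a * b)"
  using bialgebra unfolding bialgebra_def by metis

lemma dual_elem_eps: "dual_elem smul eps"
  using bialgebra by (simp add: bialgebra_def)

lemma eps_mult: "eps (a * b) = eps a * eps b"
  using bialgebra by (simp add: bialgebra_def)

lemma eps_one: "eps 1 = 1"
  using bialgebra by (simp add: bialgebra_def)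

lemma counit_left: "(\<Sum>(x, y)\<leftarrow>comult a. smul (eps x) y) = a"
  using bialgebra by (simp add: bialgebra_def)

lemma counit_right: "(\<Sum>(x, y)\<leftarrow>comult a. smul (eps y) x) = a"
  using bialgebra by (simp add: bialgebra_def)

lemma smul_sum_pairs: "smul c (\<Sum>(x, y)\<leftarrow>P. h x y) = (\<Sum>(x, y)\<leftarrow>P. smul c (h x y))"
  by (rule additive_sum_pairs) (rule scale_right_distrib)

lemma sum_pairs_smul: "smul (\<Sum>(x, y)\<leftarrow>P. c x y) a = (\<Sum>(x, y)\<leftarrow>P. smul (c x y) a)"
  by (rule additive_sum_pairs[where g = "\<lambda>c. smul c a"]) (rule scale_left_distrib)

lemma sweedler_add:
  assumes "balanced2 smul G"
  shows "(\<Sum>(x, y)\<leftarrow>comult (a + b). G x y) = (\<Sum>(x, y)\<leftarrow>comult a. G x y) + (\<Sum>(x, y)\<leftarrow>comult b. G x y)"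
proof -
  have "tensor_eq smul (tens2 (comult (a + b))) (tens2 (comult a @ comult b))"
    using bialgebra by (simp add: bialgebra_def tens2_def)
  from tens2_eval[OF this assms] show ?thesis by simp
qed

lemma sweedler_scale:
  assumes "balanced2 smul G"
  shows "(\<Sum>(x, y)\<leftarrow>comult (smul c a). G x y) = (\<Sum>(x, y)\<leftarrow>comult a. G (smul c x) y)"
proof -
  have "tensor_eq smul (tens2 (comult (smul c a))) (tens2 (map (\<lambda>(x, y). (smul c x, y)) (comult a)))"
    using bialgebra by (simp add: bialgebra_def tens2_def comp_def split_def)
  from tens2_eval[OF this assms] show ?thesis by (simp add: comp_def split_def)
qed

lemma sweedler_mult:
  assumes "balanced2 smul G"
  shows "(\<Sum>(x, y)\<leftarrow>comult (a * b). G x y) =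
    (\<Sum>(x1, x2)\<leftarrow>comult a. \<Sum>(y1, y2)\<leftarrow>comult b. G (x1 * y1) (x2 * y2))"
proof -
  let ?P = "concat (map (\<lambda>(x1, x2). map (\<lambda>(y1, y2). (x1 * y1, x2 * y2)) (comult b)) (comult a))"
  have "tensor_eq smul (tens2 (comult (a * b))) (tens2 ?P)"
    using bialgebra by (simp add: bialgebra_def tens2_def map_concat comp_def split_def)
  from tens2_eval[OF this assms] show ?thesis
    by (simp add: sum_list_map_concat comp_def split_def)
qed

lemma sweedler_coassoc:
  assumes "balanced3 smul H"
  shows "(\<Sum>(x, y)\<leftarrow>comult a. \<Sum>(y1, y2)\<leftarrow>comult y. H x y1 y2) =
    (\<Sum>(x, y)\<leftarrow>comult a. \<Sum>(x1, x2)\<leftarrow>comult x. H x1 x2 y)"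
proof -
  have "tensor_eq smul (concat (map (\<lambda>(x, y). map (\<lambda>(y1, y2). [x, y1, y2]) (comult y)) (comult a)))
      (concat (map (\<lambda>(x, y). map (\<lambda>(x1, x2). [x1, x2, y]) (comult x)) (comult a)))"
    using bialgebra by (simp add: bialgebra_def)
  from tensor_eq_eval[OF this tensor_balanced_eval3[OF assms]] show ?thesis
    by (simp add: sum_list_map_concat eval3_def comp_def split_def)
qed

lemma sweedler_grouplike:
  "grouplike smul comult eps g \<Longrightarrow> balanced2 smul G \<Longrightarrow> (\<Sum>(x, y)\<leftarrow>comult g. G x y) = G g g"
  using tens2_eval[of smul "comult g" "[(g, g)]" G] by (simp add: grouplike_def tens2_def)

lemma dual_elem_conv:
  assumes g: "dual_elem smul g" and h: "dual_elem smul h"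
  shows "dual_elem smul (conv comult g h)"
proof -
  have G: "balanced2 smul (\<lambda>x y. g x * h y)"
    using g h by (simp add: balanced2_def dual_elem_add dual_elem_scale algebra_simps)
  have "module ((*) :: 'k \<Rightarrow> 'k \<Rightarrow> 'k)"
    by unfold_locales (auto simp: algebra_simps)
  moreover have "conv comult g h (smul c a) = c * conv comult g h a" for c a
    using sweedler_scale[OF G]
    by (simp add: conv_def dual_elem_scale[OF g] sum_pairs_mult_left mult.assoc)
  ultimately show ?thesis
    unfolding dual_elem_def module_hom_def module_hom_axioms_def
    using sweedler_add[OF G] by (simp add: conv_def module_axioms)
qed

lemma sweedler_mult_grouplike:
  assumes "grouplike smul comult eps g" and G: "balanced2 smul G"
  shows "(\<Sum>(x, y)\<leftarrow>comult (a * g). G x y) = (\<Sum>(x, y)\<leftarrow>comult a. G (x * g) (y * g))"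
proof -
  have "balanced2 smul (\<lambda>y1 y2. G (x * y1) (y * y2))" for x y
    using G by (simp add: balanced2_def distrib_left smul_mult_right)
  then show ?thesis
    by (simp add: sweedler_mult[OF G] sweedler_grouplike[OF assms(1)])
qed

end

locale k_hopf_algebra = k_bialgebra smul comult eps
  for smul :: "'k::comm_ring_1 \<Rightarrow> 'h::ring_1 \<Rightarrow> 'h" and comult and eps +
  fixes S :: "'h \<Rightarrow> 'h"
  assumes antipode: "antipode smul comult eps S"
begin

lemma module_hom_S: "module_hom smul smul S"
  using antipode by (simp add: antipode_def)

lemma S_add: "S (x + y) = S x + S y"
  using module_hom_S by (rule module_hom.add)

lemma S_scale: "S (smul c x) = smul c (S x)"
  using module_hom_S by (rule module_hom.scale)

lemma S_sum_pairs: "S (\<Sum>(x, y)\<leftarrow>P. h x y) = (\<Sum>(x, y)\<leftarrow>P. S (h x y))"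
  using module_hom_S by (rule module_hom_sum_pairs)

lemma antipode_left: "(\<Sum>(x, y)\<leftarrow>comult a. S x * y) = smul (eps a) 1"
  using antipode by (simp add: antipode_def)

lemma antipode_right: "(\<Sum>(x, y)\<leftarrow>comult a. x * S y) = smul (eps a) 1"
  using antipode by (simp add: antipode_def)

lemma grouplike_antipode:
  assumes "grouplike smul comult eps g"
  shows "g * S g = 1" and "S g * g = 1"
proof -
  have "balanced2 smul (\<lambda>x y. x * S y)" "balanced2 smul (\<lambda>x y. S x * y)"
    by (simp_all add: balanced2_def S_add S_scale smul_mult_left smul_mult_right algebra_simps)
  from this[THEN sweedler_grouplike[OF assms]] show "g * S g = 1" "S g * g = 1"
    using assms antipode_left[of g] antipode_right[of g] by (simp_all add: grouplike_def)
qed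

lemma antipode_mult_grouplike:
  assumes g: "grouplike smul comult eps g"
  shows "S (u * g) = S g * S u"
proof -
  have counit_g: "smul (eps w) 1 = (\<Sum>(p, q)\<leftarrow>comult w. S (p * g) * (q * g))" for w
  proof -
    have "balanced2 smul (\<lambda>x y. S x * y)"
      by (simp add: balanced2_def S_add S_scale smul_mult_left smul_mult_right algebra_simps)
    then have "(\<Sum>(x, y)\<leftarrow>comult (w * g). S x * y) = (\<Sum>(p, q)\<leftarrow>comult w. S (p * g) * (q * g))"
      by (rule sweedler_mult_grouplike[OF g])
    then show ?thesis
      using g by (simp add: antipode_left eps_mult grouplike_def)
  qed
  have H: "balanced3 smul (\<lambda>p q r. S (p * g) * q * S r)"
    by (simp add: balanced3_def S_add S_scale smul_mult_left smul_mult_right algebra_simps)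
  have "S g * S u = S g * S (\<Sum>(x, y)\<leftarrow>comult u. smul (eps x) y)"
    by (simp add: counit_left)
  also have "\<dots> = (\<Sum>(x, y)\<leftarrow>comult u. smul (eps x) 1 * (S g * S y))"
    by (simp add: S_sum_pairs S_scale sum_pairs_mult_left smul_mult_left smul_mult_right)
  also have "\<dots> = (\<Sum>(x, y)\<leftarrow>comult u. (\<Sum>(p, q)\<leftarrow>comult x. S (p * g) * (q * g)) * (S g * S y))"
    by (simp add: counit_g)
  also have "\<dots> = (\<Sum>(x, y)\<leftarrow>comult u. \<Sum>(p, q)\<leftarrow>comult x. S (p * g) * q * S y)"
    using grouplike_antipode(1)[OF g]
    by (simp add: sum_pairs_mult_right mult.assoc mult.assoc[of g, symmetric])
  also have "\<dots> = (\<Sum>(x, y)\<leftarrow>comult u. \<Sum>(y1, y2)\<leftarrow>comult y. S (x * g) * y1 * S y2)"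
    by (rule sweedler_coassoc[OF H, symmetric])
  also have "\<dots> = (\<Sum>(x, y)\<leftarrow>comult u. S (x * g) * smul (eps y) 1)"
    by (simp add: antipode_right[symmetric] sum_pairs_mult_left mult.assoc)
  also have "\<dots> = S ((\<Sum>(x, y)\<leftarrow>comult u. smul (eps y) x) * g)"
    by (simp add: S_sum_pairs S_scale smul_mult_left smul_mult_right sum_pairs_mult_right)
  also have "\<dots> = S (u * g)"
    by (simp add: counit_right)
  finally show ?thesis by simp
qed

end

section \<open>FH-algebras\<close>

locale fh_algebra_norm = k_hopf_algebra smul comult eps S
  for smul :: "'k::comm_ring_1 \<Rightarrow> 'h::ring_1 \<Rightarrow> 'h" and comult and eps and S +
  fixes f :: "'h \<Rightarrow> 'k" and t :: 'h
  assumes frobenius: "frobenius_hom smul f"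
    and right_integral: "right_integral smul comult f"
    and norm: "\<forall>x. f (t * x) = eps x"
begin

lemma dual_elem_f: "dual_elem smul f"
  using frobenius by (simp add: frobenius_hom_def)

lemma f_add: "f (x + y) = f x + f y"
  by (rule dual_elem_add[OF dual_elem_f])

lemma f_scale: "f (smul c x) = c * f x"
  by (rule dual_elem_scale[OF dual_elem_f])

lemma f_sum_pairs: "f (\<Sum>(x, y)\<leftarrow>P. h x y) = (\<Sum>(x, y)\<leftarrow>P. f (h x y))"
  by (rule dual_elem_sum_pairs[OF dual_elem_f])

lemma f_norm: "f t = 1"
  using norm eps_one by (metis mult.right_neutral)

lemma sweedler_right_integral: "(\<Sum>(x, y)\<leftarrow>comult a. smul (f x) y) = smul (f a) 1"
  using right_integral by (simp add: right_integral_def)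

lemma dual_ext: "(\<And>\<phi>. dual_elem smul \<phi> \<Longrightarrow> \<phi> x = \<phi> y) \<Longrightarrow> x = y"
  using frobenius fg_projective_dual_ext by (auto simp: frobenius_hom_def)

lemma frobenius_coordinates:
  obtains B where "\<And>a. a = (\<Sum>(x, y)\<leftarrow>B. smul (f (a * x)) y)"
  using frobenius unfolding frobenius_hom_def by metis

lemma right_integral_antipode:
  "(\<Sum>(p, q)\<leftarrow>comult z. smul (f (a * p)) (S q)) = (\<Sum>(x, y)\<leftarrow>comult a. smul (f (x * z)) y)"
proof -
  have G: "balanced2 smul (\<lambda>u v. smul (f u) v)"
    by (simp add: balanced2_def f_add f_scale scale_left_distrib scale_right_distrib mult.commute)
  have "(\<Sum>(p, q)\<leftarrow>comult z. smul (f (a * p)) (S q)) =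
      (\<Sum>(p, q)\<leftarrow>comult z. (\<Sum>(x, y)\<leftarrow>comult (a * p). smul (f x) y) * S q)"
    by (simp add: sweedler_right_integral smul_mult_left)
  also have "\<dots> = (\<Sum>(p, q)\<leftarrow>comult z. \<Sum>(x1, x2)\<leftarrow>comult a. \<Sum>(p1, p2)\<leftarrow>comult p.
      smul (f (x1 * p1)) (x2 * p2 * S q))"
    by (simp add: sweedler_mult[OF G] sum_pairs_mult_right smul_mult_left)
  also have "\<dots> = (\<Sum>(x1, x2)\<leftarrow>comult a. \<Sum>(p, q)\<leftarrow>comult z. \<Sum>(p1, p2)\<leftarrow>comult p.
      smul (f (x1 * p1)) (x2 * p2 * S q))"
    by (rule sum_pairs_swap)
  also have "\<dots> = (\<Sum>(x1, x2)\<leftarrow>comult a. \<Sum>(p, q)\<leftarrow>comult z. \<Sum>(q1, q2)\<leftarrow>comult q.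
      smul (f (x1 * p)) (x2 * q1 * S q2))"
  proof (rule sum_pairs_cong)
    fix x1 x2
    have "balanced3 smul (\<lambda>p q r. smul (f (x1 * p)) (x2 * q * S r))"
      by (simp add: balanced3_def f_add f_scale S_add S_scale smul_mult_left smul_mult_right
          algebra_simps scale_left_distrib scale_right_distrib)
    then show "(\<Sum>(p, q)\<leftarrow>comult z. \<Sum>(p1, p2)\<leftarrow>comult p. smul (f (x1 * p1)) (x2 * p2 * S q)) =
        (\<Sum>(p, q)\<leftarrow>comult z. \<Sum>(q1, q2)\<leftarrow>comult q. smul (f (x1 * p)) (x2 * q1 * S q2))"
      by (rule sweedler_coassoc[symmetric])
  qed
  also have "\<dots> = (\<Sum>(x1, x2)\<leftarrow>comult a. \<Sum>(p, q)\<leftarrow>comult z.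
      smul (f (x1 * p)) (x2 * smul (eps q) 1))"
    by (simp add: antipode_right[symmetric] sum_pairs_mult_left smul_sum_pairs mult.assoc)
  also have "\<dots> = (\<Sum>(x1, x2)\<leftarrow>comult a. \<Sum>(p, q)\<leftarrow>comult z. smul (f (x1 * smul (eps q) p)) x2)"
    by (simp add: smul_mult_right f_scale mult.commute)
  also have "\<dots> = (\<Sum>(x1, x2)\<leftarrow>comult a. smul (f (x1 * z)) x2)"
  proof (rule sum_pairs_cong)
    fix x1 x2
    have "f (x1 * z) = (\<Sum>(p, q)\<leftarrow>comult z. f (x1 * smul (eps q) p))"
      by (subst (1) counit_right[of z, symmetric]) (simp add: sum_pairs_mult_left f_sum_pairs)
    then show "(\<Sum>(p, q)\<leftarrow>comult z. smul (f (x1 * smul (eps q) p)) x2) = smul (f (x1 * z)) x2"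
      by (simp add: sum_pairs_smul)
  qed
  finally show ?thesis .
qed

lemma antipode_eq_sweedler_norm: "(\<Sum>(x, y)\<leftarrow>comult t. smul (f (x * z)) y) = S z"
proof -
  have "(\<Sum>(x, y)\<leftarrow>comult t. smul (f (x * z)) y) = (\<Sum>(p, q)\<leftarrow>comult z. smul (eps p) (S q))"
    by (simp add: norm flip: right_integral_antipode)
  also have "\<dots> = S (\<Sum>(p, q)\<leftarrow>comult z. smul (eps p) q)"
    by (simp add: S_sum_pairs S_scale)
  also have "\<dots> = S z"
    by (simp only: counit_left)
  finally show ?thesis .
qed

end

locale fh_algebra_distinguished = fh_algebra_norm smul comult eps S f t
  for smul :: "'k::comm_ring_1 \<Rightarrow> 'h::ring_1 \<Rightarrow> 'h" and comult and eps and S and f and t +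
  fixes b :: 'h
  assumes distinguished: "\<forall>g. dual_elem smul g \<longrightarrow> conv comult g f = (\<lambda>x. g b * f x)"
begin

lemma sweedler_distinguished:
  "dual_elem smul g \<Longrightarrow> (\<Sum>(x1, x2)\<leftarrow>comult x. g x1 * f x2) = g b * f x"
  using distinguished by (metis conv_def)

lemma eps_distinguished: "eps b = 1"
proof -
  have "f t = (\<Sum>(x, y)\<leftarrow>comult t. eps x * f y)"
    by (subst (1) counit_left[of t, symmetric]) (simp add: f_sum_pairs f_scale)
  also have "\<dots> = eps b * f t"
    by (rule sweedler_distinguished[OF dual_elem_eps])
  finally show ?thesis
    using f_norm by simp
qed

lemma sweedler_f_right: "(\<Sum>(x1, x2)\<leftarrow>comult x. smul (f x2) x1) = smul (f x) b"
proof (rule dual_ext)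
  fix \<phi> assume \<phi>: "dual_elem smul \<phi>"
  have "\<phi> (\<Sum>(x1, x2)\<leftarrow>comult x. smul (f x2) x1) = (\<Sum>(x1, x2)\<leftarrow>comult x. \<phi> x1 * f x2)"
    by (simp add: dual_elem_sum_pairs[OF \<phi>] dual_elem_scale[OF \<phi>] mult.commute)
  also have "\<dots> = \<phi> (smul (f x) b)"
    by (simp add: sweedler_distinguished[OF \<phi>] dual_elem_scale[OF \<phi>] mult.commute)
  finally show "\<phi> (\<Sum>(x1, x2)\<leftarrow>comult x. smul (f x2) x1) = \<phi> (smul (f x) b)" .
qed

lemma sweedler_distinguished_dual_mult:
  assumes g: "dual_elem smul g" and h: "dual_elem smul h"
  shows "(\<Sum>(x, y)\<leftarrow>comult b. g x * h y) = g b * h b"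
proof -
  have gf: "(\<Sum>(x, y)\<leftarrow>comult t. g x * f y) = g b"
    using sweedler_distinguished[OF g] f_norm by simp
  have G: "balanced3 smul (\<lambda>x y z. g x * h y * f z)"
    using g h by (simp add: balanced3_def dual_elem_add dual_elem_scale dual_elem_add[OF dual_elem_f]
        dual_elem_scale[OF dual_elem_f] algebra_simps)
  have "conv comult g h b = (\<Sum>(x, y)\<leftarrow>comult t. conv comult g h x * f y)"
    using sweedler_distinguished[OF dual_elem_conv[OF g h]] f_norm by simp
  also have "\<dots> = (\<Sum>(x, y)\<leftarrow>comult t. \<Sum>(y1, y2)\<leftarrow>comult y. g x * h y1 * f y2)"
    unfolding conv_def sum_pairs_mult_right by (rule sweedler_coassoc[OF G, symmetric])
  also have "\<dots> = (\<Sum>(x, y)\<leftarrow>comult t. g x * (h b * f y))"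
    by (simp add: mult.assoc sweedler_distinguished[OF h] flip: sum_pairs_mult_left)
  also have "\<dots> = h b * g b"
    by (simp add: sum_pairs_mult_left algebra_simps flip: gf)
  finally show ?thesis
    by (simp add: conv_def mult.commute)
qed

lemma grouplike_distinguished: "grouplike smul comult eps b"
proof -
  obtain es :: "('h \<times> ('h \<Rightarrow> 'k)) list" where
    dual: "\<forall>(e, \<phi>) \<in> set es. dual_elem smul \<phi>" and
    basis: "\<And>a. a = (\<Sum>(e, \<phi>)\<leftarrow>es. smul (\<phi> a) e)"
    using frobenius unfolding frobenius_hom_def fg_projective_def by blast
  have "tensor_eq smul (tens2 (comult b)) (tens2 [(b, b)])"
  proof (rule tens2_eq_by_coordinates)
    show "a = (\<Sum>(\<phi>, e)\<leftarrow>map (\<lambda>(e, \<phi>). (\<phi>, e)) es. smul (\<phi> a) e)" for a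
      using basis[of a] by (simp add: comp_def split_def)
    fix \<phi> e assume "(\<phi>, e) \<in> set (map (\<lambda>(e, \<phi>). (\<phi>, e)) es)"
    then have \<phi>: "dual_elem smul \<phi>"
      using dual by auto
    show "(\<Sum>(p, q)\<leftarrow>comult b. smul (\<phi> q) p) = (\<Sum>(p, q)\<leftarrow>[(b, b)]. smul (\<phi> q) p)"
    proof (rule dual_ext)
      fix \<psi> assume \<psi>: "dual_elem smul \<psi>"
      show "\<psi> (\<Sum>(p, q)\<leftarrow>comult b. smul (\<phi> q) p) = \<psi> (\<Sum>(p, q)\<leftarrow>[(b, b)]. smul (\<phi> q) p)"
        using sweedler_distinguished_dual_mult[OF \<psi> \<phi>]
        by (simp add: dual_elem_sum_pairs[OF \<psi>] dual_elem_scale[OF \<psi>] mult.commute)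
    qed
  qed
  then show ?thesis
    by (simp add: grouplike_def tens2_def eps_distinguished)
qed

lemma antipode_f_distinguished:
  "(\<Sum>(x, y)\<leftarrow>comult a. S x * smul (f (y * z)) b) = (\<Sum>(p, q)\<leftarrow>comult z. smul (f (a * q)) p)"
proof -
  have G: "balanced2 smul (\<lambda>w1 w2. smul (f w2) w1)"
    by (simp add: balanced2_def f_add f_scale scale_left_distrib scale_right_distrib mult.commute)
  have "(\<Sum>(x, y)\<leftarrow>comult a. S x * smul (f (y * z)) b) =
      (\<Sum>(x, y)\<leftarrow>comult a. S x * (\<Sum>(y1, y2)\<leftarrow>comult y. \<Sum>(p, q)\<leftarrow>comult z. smul (f (y2 * q)) (y1 * p)))"
    by (simp add: sweedler_mult[OF G] flip: sweedler_f_right)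
  also have "\<dots> = (\<Sum>(x, y)\<leftarrow>comult a. \<Sum>(p, q)\<leftarrow>comult z. \<Sum>(y1, y2)\<leftarrow>comult y.
      S x * y1 * smul (f (y2 * q)) p)"
    by (rule sum_pairs_cong, subst sum_pairs_swap)
      (simp add: sum_pairs_mult_left smul_mult_right mult.assoc)
  also have "\<dots> = (\<Sum>(p, q)\<leftarrow>comult z. \<Sum>(x, y)\<leftarrow>comult a. \<Sum>(y1, y2)\<leftarrow>comult y.
      S x * y1 * smul (f (y2 * q)) p)"
    by (rule sum_pairs_swap)
  also have "\<dots> = (\<Sum>(p, q)\<leftarrow>comult z. \<Sum>(x, y)\<leftarrow>comult a. \<Sum>(x1, x2)\<leftarrow>comult x.
      S x1 * x2 * smul (f (y * q)) p)"
  proof (rule sum_pairs_cong)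
    fix p q
    have "balanced3 smul (\<lambda>x1 x2 y. S x1 * x2 * smul (f (y * q)) p)"
      by (simp add: balanced3_def f_add f_scale S_add S_scale smul_mult_left smul_mult_right
          algebra_simps scale_left_distrib scale_right_distrib)
    then show "(\<Sum>(x, y)\<leftarrow>comult a. \<Sum>(y1, y2)\<leftarrow>comult y. S x * y1 * smul (f (y2 * q)) p) =
        (\<Sum>(x, y)\<leftarrow>comult a. \<Sum>(x1, x2)\<leftarrow>comult x. S x1 * x2 * smul (f (y * q)) p)"
      by (rule sweedler_coassoc)
  qed
  also have "\<dots> = (\<Sum>(p, q)\<leftarrow>comult z. \<Sum>(x, y)\<leftarrow>comult a. smul (eps x) 1 * smul (f (y * q)) p)"
    by (simp add: sum_pairs_mult_right flip: antipode_left)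
  also have "\<dots> = (\<Sum>(p, q)\<leftarrow>comult z. smul (f (a * q)) p)"
  proof (rule sum_pairs_cong)
    fix p q
    have "f (a * q) = (\<Sum>(x, y)\<leftarrow>comult a. eps x * f (y * q))"
      by (subst (1) counit_left[of a, symmetric])
        (simp add: sum_pairs_mult_right f_sum_pairs smul_mult_left f_scale)
    then show "(\<Sum>(x, y)\<leftarrow>comult a. smul (eps x) 1 * smul (f (y * q)) p) = smul (f (a * q)) p"
      by (simp add: sum_pairs_smul smul_mult_left)
  qed
  finally show ?thesis .
qed

lemma sweedler_norm_distinguished: "(\<Sum>(x, y)\<leftarrow>comult t. S x * smul (f (y * z)) b) = z"
  by (simp add: antipode_f_distinguished norm counit_right)

lemma comult_norm_flip:
  "tensor_eq smul (map (\<lambda>(x, y). [y, x]) (comult t)) (map (\<lambda>(x, y). [S b * S (S x), y]) (comult t))"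
proof -
  obtain B where B: "\<And>a. a = (\<Sum>(x, y)\<leftarrow>B. smul (f (a * x)) y)"
    using frobenius_coordinates by blast
  let ?P = "map (\<lambda>(x, y). (y, x)) (comult t)"
  let ?Q = "map (\<lambda>(x, y). (S b * S (S x), y)) (comult t)"
  have "tensor_eq smul (tens2 ?P) (tens2 ?Q)"
  proof (rule tens2_eq_by_coordinates[where \<psi> = "\<lambda>x a. f (a * x)", OF B])
    fix x y
    have "(\<Sum>(p, q)\<leftarrow>?Q. smul (f (q * x)) p) = (\<Sum>(p, q)\<leftarrow>comult t. smul (f (q * x)) (S (S p * b)))"
      using grouplike_distinguished
      by (simp add: comp_def split_def antipode_mult_grouplike)
    also have "\<dots> = S (\<Sum>(p, q)\<leftarrow>comult t. S p * smul (f (q * x)) b)"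
      by (simp add: S_sum_pairs S_scale smul_mult_right)
    also have "\<dots> = S x"
      by (simp only: sweedler_norm_distinguished)
    also have "\<dots> = (\<Sum>(p, q)\<leftarrow>?P. smul (f (q * x)) p)"
      by (simp add: comp_def split_def flip: antipode_eq_sweedler_norm)
    finally show "(\<Sum>(p, q)\<leftarrow>?P. smul (f (q * x)) p) = (\<Sum>(p, q)\<leftarrow>?Q. smul (f (q * x)) p)"
      by simp
  qed
  then show ?thesis
    by (simp add: tens2_def comp_def split_def)
qed

end

theorem mainTheorem1:
  fixes smul :: "'k::comm_ring_1 \<Rightarrow> 'h::ring_1 \<Rightarrow> 'h"
    and comult :: "'h \<Rightarrow> ('h \<times> 'h) list"
    and eps :: "'h \<Rightarrow> 'k" and f :: "'h \<Rightarrow> 'k"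
    and S :: "'h \<Rightarrow> 'h" and t b :: 'h
  assumes FH: "FH_algebra smul comult eps f"
    and S: "antipode smul comult eps S"
    and norm: "\<forall>x. f (t * x) = eps x"
    and distinguished: "\<forall>g. dual_elem smul g \<longrightarrow> conv comult g f = (\<lambda>x. g b * f x)"
  shows "\<exists>binv. binv * b = 1 \<and> b * binv = 1 \<and>
           tensor_eq smul (map (\<lambda>(x, y). [y, x]) (comult t))
                          (map (\<lambda>(x, y). [binv * S (S x), y]) (comult t))"
proof -
  interpret fh_algebra_distinguished smul comult eps S f t b
    using FH S norm distinguished
    by unfold_locales (simp_all add: FH_algebra_def)
  show ?thesis
    using grouplike_antipode[OF grouplike_distinguished] comult_norm_flip by blast
qed

end
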